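(* In the setting and for the algorithm OOPE described in the context, let $l_M$ denote the number of phases up to and including the penultimate phase (the last phase being the one in which the online samples are exhausted). Define $H^{-1}:\mathbb{R}_{\ge0}\to\mathbb{N}\cup\{0\}$ by $H^{-1}(x)=\max\{n\in\mathbb{N}\cup\{0\}:\sum_{l=1}^n4^l\log(4l^2|\mathcal{A}|T)\le x\}$. Then $l_M\le H^{-1}\big(\frac{T}{3d_{\mathrm{eff}}}\big)$.
   Context: Setting: $\mathcal{A}\subset\mathbb{R}^d$ finite, known, $\mathrm{span}(\mathcal{A})=\mathbb{R}^d$; unknown $\theta^*\in\mathbb{R}^d$; pulling $a$ yields $\langle\theta^*,a\rangle+\eta$, $\eta$ zero-mean 1-sub-Gaussian independent; $T_{\mathrm{off}}$ offline samples collected non-adaptively by fixed $\pi_{\mathrm{off}}\in\Delta(\mathcal{A})$ ($\pi_{\mathrm{off}}(a)T_{\mathrm{off}}$ from arm $a$, same reward law); then $T$ online rounds. Notation: $V_\pi=\sum_a\pi(a)aa^\top$, $g_{\mathcal{B}}(\pi)=\max_{a\in\mathcal{B}}a^\top V_\pi^{-1}a$, $\lambda_k$ the $k$-th smallest eigenvalue, $d_{\mathrm{eff}}=\min\big(\sum_{k=1}^d(1+\frac{T_{\mathrm{off}}}{T}\frac{\lambda_k(V_{\pi_{\mathrm{off}}})}{\max_a\|a\|^2})^{-1},\frac{T}{T_{\mathrm{off}}}g_{\mathcal{A}}(\pi_{\mathrm{off}})\big)$. Algorithm OOPE: $\alpha=T_{\mathrm{off}}/(T_{\mathrm{off}}+T)$,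 $\mathcal{A}_1=\mathcal{A}$. Phase $l$: if $|\mathcal{A}_l|=1$ pull its arm for all remaining rounds. Else $\epsilon_l=2^{-l}$, $\pi^*_{l,\mathrm{on}}\in\arg\max_{\pi\in\Delta(\mathcal{A}_l)}\log\det V_{(1-\alpha)\pi+\alpha\pi_{\mathrm{off}}}$, $\tilde\pi_l=(1-\alpha)\pi^*_{l,\mathrm{on}}+\alpha\pi_{\mathrm{off}}$; for each arm $a$ in turn take $n^l_{\mathrm{on}}(a)=\lceil3d_{\mathrm{eff}}\pi^*_{l,\mathrm{on}}(a)\log(4l^2|\mathcal{A}|T)/\epsilon_l^2\rceil$ new online pulls and request $n^l_{\mathrm{off}}(a)=\lceil2\alpha\pi_{\mathrm{off}}(a)g_{\mathcal{A}_l}(\tilde\pi_l)\log(4l^2|\mathcal{A}|T)/\epsilon_l^2\rceil$ offline samples of $a$ not used before (all remaining if fewer). If the online budget would be exceeded, the remaining rounds are used and the algorithm stops without elimination. Otherwise compute the least-squares estimate $\hat\theta_l$ from phase-$l$ samples only, and set $\mathcal{A}_{l+1}=\mathcal{A}_l\setminus\{a:\max_{a'\in\mathcal{A}_l}\langle a'-a,\hat\theta_l\rangle\ge2\epsilon_l\}$. *)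

theory Defs
  imports "HOL-Analysis.Analysis" "HOL-Computational_Algebra.Polynomial"
begin

(* Arms live in R^d, rendered as real^'n with d = CARD('n). *)

definition distr_on :: "'b set \<Rightarrow> ('b \<Rightarrow> real) \<Rightarrow> bool" where
  "distr_on B p \<longleftrightarrow> (\<forall>a. 0 \<le> p a) \<and> (\<forall>a. a \<notin> B \<longrightarrow> p a = 0) \<and> sum p B = 1"

definition outer :: "real^'n \<Rightarrow> real^'n^'n" where
  "outer a = (\<chi> i j. a$i * a$j)"

definition Vmat :: "(real^'n) set \<Rightarrow> (real^'n \<Rightarrow> real) \<Rightarrow> real^'n^'n" where
  "Vmat A p = (\<Sum>a\<in>A. p a *\<^sub>R outer a)"

definition gfun :: "(real^'n) set \<Rightarrow> (real^'n) set \<Rightarrow> (real^'n \<Rightarrow> real) \<Rightarrow> ereal" where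
  "gfun A B p = (if invertible (Vmat A p)
      then ereal (Max ((\<lambda>a. a \<bullet> (matrix_inv (Vmat A p) *v a)) ` B)) else \<infinity>)"

definition logdet :: "real^'n^'n \<Rightarrow> ereal" where
  "logdet M = (if 0 < det M then ereal (ln (det M)) else -\<infinity>)"

definition charpoly :: "real^'n^'n \<Rightarrow> real poly" where
  "charpoly M = det (\<chi> i j. if i = j then [:- (M$i$j), 1:] else [:- (M$i$j):])"

text \<open>Eigenvalues with multiplicity in ascending order (for symmetric M the characteristic
  polynomial splits over the reals), and lambda_k = k-th smallest eigenvalue, k = 1..d.\<close>
definition eigs_sorted :: "real^'n^'n \<Rightarrow> real list" where
  "eigs_sorted M = (THE ls. sorted ls \<and> length ls = CARD('n) \<and>
      charpoly M = prod_list (map (\<lambda>x. [:- x, 1:]) ls))"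

definition eigk :: "real^'n^'n \<Rightarrow> nat \<Rightarrow> real" where
  "eigk M k = eigs_sorted M ! (k - 1)"

definition deff :: "(real^'n) set \<Rightarrow> nat \<Rightarrow> nat \<Rightarrow> (real^'n \<Rightarrow> real) \<Rightarrow> real" where
  "deff A T Toff poff = real_of_ereal (min
     (ereal (\<Sum>k=1..CARD('n). inverse (1 + (real Toff / real T) *
          eigk (Vmat A poff) k / Max ((\<lambda>a. (norm a)\<^sup>2) ` A))))
     (if Toff = 0 then \<infinity> else ereal (real T / real Toff) * gfun A A poff))"

definition logterm :: "(real^'n) set \<Rightarrow> nat \<Rightarrow> nat \<Rightarrow> real" where
  "logterm A T l = ln (4 * real l ^ 2 * real (card A) * real T)"

definition epsl :: "nat \<Rightarrow> real" where
  "epsl l = (1/2) ^ l"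

definition alpha :: "nat \<Rightarrow> nat \<Rightarrow> real" where
  "alpha T Toff = real Toff / (real Toff + real T)"

definition Hinv :: "(real^'n) set \<Rightarrow> nat \<Rightarrow> real \<Rightarrow> nat" where
  "Hinv A T x = Max {n::nat. (\<Sum>l=1..n. 4 ^ l * logterm A T l) \<le> x}"

definition non :: "(real^'n) set \<Rightarrow> nat \<Rightarrow> nat \<Rightarrow> (real^'n \<Rightarrow> real)
     \<Rightarrow> (nat \<Rightarrow> real^'n \<Rightarrow> real) \<Rightarrow> nat \<Rightarrow> real^'n \<Rightarrow> nat" where
  "non A T Toff poff pis l a =
     nat \<lceil>3 * deff A T Toff poff * pis l a * logterm A T l / (epsl l)\<^sup>2\<rceil>"

definition onUsed :: "(real^'n) set \<Rightarrow> nat \<Rightarrow> nat \<Rightarrow> (real^'n \<Rightarrow> real)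
     \<Rightarrow> (nat \<Rightarrow> real^'n \<Rightarrow> real) \<Rightarrow> nat \<Rightarrow> nat" where
  "onUsed A T Toff poff pis l = (\<Sum>j=1..l. \<Sum>a\<in>A. non A T Toff poff pis j a)"

definition mixd :: "nat \<Rightarrow> nat \<Rightarrow> (real^'n \<Rightarrow> real) \<Rightarrow> (real^'n \<Rightarrow> real) \<Rightarrow> real^'n \<Rightarrow> real" where
  "mixd T Toff poff p = (\<lambda>a. (1 - alpha T Toff) * p a + alpha T Toff * poff a)"

text \<open>Offline samples of arm a taken in phase l when u of them were used before
  (requested amount, capped by what remains; all remaining if the request is infinite).\<close>
definition offTake :: "(real^'n) set \<Rightarrow> nat \<Rightarrow> nat \<Rightarrow> (real^'n \<Rightarrow> nat) \<Rightarrow> (real^'n \<Rightarrow> real)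
     \<Rightarrow> (nat \<Rightarrow> (real^'n) set) \<Rightarrow> (nat \<Rightarrow> real^'n \<Rightarrow> real) \<Rightarrow> nat \<Rightarrow> nat \<Rightarrow> real^'n \<Rightarrow> nat" where
  "offTake A T Toff Noff poff Act pis l u a =
     (let g = gfun A (Act l) (mixd T Toff poff (pis l)) in
      if g = \<infinity> then Noff a - u
      else min (Noff a - u)
        (nat \<lceil>2 * alpha T Toff * poff a * real_of_ereal g * logterm A T l / (epsl l)\<^sup>2\<rceil>))"

fun offUsed :: "(real^'n) set \<Rightarrow> nat \<Rightarrow> nat \<Rightarrow> (real^'n \<Rightarrow> nat) \<Rightarrow> (real^'n \<Rightarrow> real)
     \<Rightarrow> (nat \<Rightarrow> (real^'n) set) \<Rightarrow> (nat \<Rightarrow> real^'n \<Rightarrow> real) \<Rightarrow> nat \<Rightarrow> real^'n \<Rightarrow> nat" where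
  "offUsed A T Toff Noff poff Act pis 0 a = 0"
| "offUsed A T Toff Noff poff Act pis (Suc l) a =
     offUsed A T Toff Noff poff Act pis l a +
     offTake A T Toff Noff poff Act pis (Suc l) (offUsed A T Toff Noff poff Act pis l a) a"

text \<open>Least-squares objective on the phase-l samples only: online rewards yon l a j
  (j-th online pull of arm a in phase l) and offline rewards yoff a j (j-th offline sample of a).\<close>
definition lsobj :: "(real^'n) set \<Rightarrow> nat \<Rightarrow> nat \<Rightarrow> (real^'n \<Rightarrow> nat) \<Rightarrow> (real^'n \<Rightarrow> real)
     \<Rightarrow> (nat \<Rightarrow> real^'n \<Rightarrow> nat \<Rightarrow> real) \<Rightarrow> (real^'n \<Rightarrow> nat \<Rightarrow> real)
     \<Rightarrow> (nat \<Rightarrow> (real^'n) set) \<Rightarrow> (nat \<Rightarrow> real^'n \<Rightarrow> real) \<Rightarrow> nat \<Rightarrow> real^'n \<Rightarrow> real" where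
  "lsobj A T Toff Noff poff yon yoff Act pis l \<theta> =
     (\<Sum>a\<in>A. (\<Sum>j<non A T Toff poff pis l a. (yon l a j - \<theta> \<bullet> a)\<^sup>2)
        + (\<Sum>j\<in>{offUsed A T Toff Noff poff Act pis (l - 1) a ..< offUsed A T Toff Noff poff Act pis l a}.
             (yoff a j - \<theta> \<bullet> a)\<^sup>2))"

text \<open>Phases 1..l were all run to completion with an elimination step
  (|A_j| /= 1 and the online budget was not exceeded).\<close>
definition completed :: "(real^'n) set \<Rightarrow> nat \<Rightarrow> nat \<Rightarrow> (real^'n \<Rightarrow> real)
     \<Rightarrow> (nat \<Rightarrow> (real^'n) set) \<Rightarrow> (nat \<Rightarrow> real^'n \<Rightarrow> real) \<Rightarrow> nat \<Rightarrow> bool" where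
  "completed A T Toff poff Act pis l \<longleftrightarrow>
     (\<forall>j\<in>{1..l}. card (Act j) \<noteq> 1 \<and> onUsed A T Toff poff pis j \<le> T)"

text \<open>Act, pis, th form an execution of OOPE on the reward realization (yon, yoff):
  Act l = A_l, pis l = pi*_{l,on} (any maximizer), th l = hat theta_l (any least-squares solution).\<close>
definition oope_run :: "(real^'n) set \<Rightarrow> nat \<Rightarrow> nat \<Rightarrow> (real^'n \<Rightarrow> nat) \<Rightarrow> (real^'n \<Rightarrow> real)
     \<Rightarrow> (nat \<Rightarrow> real^'n \<Rightarrow> nat \<Rightarrow> real) \<Rightarrow> (real^'n \<Rightarrow> nat \<Rightarrow> real)
     \<Rightarrow> (nat \<Rightarrow> (real^'n) set) \<Rightarrow> (nat \<Rightarrow> real^'n \<Rightarrow> real) \<Rightarrow> (nat \<Rightarrow> real^'n) \<Rightarrow> bool" where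
  "oope_run A T Toff Noff poff yon yoff Act pis th \<longleftrightarrow>
     Act 1 = A \<and>
     (\<forall>l\<ge>1. completed A T Toff poff Act pis (l - 1) \<and> card (Act l) \<noteq> 1 \<longrightarrow>
        distr_on (Act l) (pis l) \<and>
        (\<forall>p. distr_on (Act l) p \<longrightarrow>
           logdet (Vmat A (mixd T Toff poff p)) \<le> logdet (Vmat A (mixd T Toff poff (pis l))))) \<and>
     (\<forall>l\<ge>1. completed A T Toff poff Act pis l \<longrightarrow>
        (\<forall>\<theta>. lsobj A T Toff Noff poff yon yoff Act pis l (th l)
              \<le> lsobj A T Toff Noff poff yon yoff Act pis l \<theta>) \<and>
        Act (Suc l) = Act l - {a \<in> Act l. 2 * epsl l \<le> Max ((\<lambda>a'. (a' - a) \<bullet> th l) ` Act l)})"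

end

theory Submission
  imports Defs "HOL-Computational_Algebra.Fundamental_Theorem_Algebra"
begin

(* Every completed phase l uses at least 3 d_eff 4^l log(4 l^2 |A| T) online pulls, because the
   design pi*_{l,on} is a probability distribution on A_l \<subseteq> A and eps_l^-2 = 4^l.  A completed
   phase stays within the budget T, so summing over l \<le> l_M gives
   sum_{l \<le> l_M} 4^l log(4 l^2 |A| T) \<le> T / (3 d_eff), which is the definition of H^-1.
   The substantial point is d_eff > 0, without which T / (3 d_eff) is meaningless: g_A(pi_off) > 0,
   and the eigenvalues lambda_k(V_pi_off) are well defined and nonnegative, because the
   characteristic polynomial of the Gram-type matrix V_pi splits over the reals with roots \<ge> 0.
   The latter is seen over the complex numbers: for an eigenvector v with eigenvalue z,
   z |v|^2 = sum_a pi(a) |<a, v>|^2. *)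

lemma det_ring_hom:
  fixes h :: "'a::comm_ring_1 \<Rightarrow> 'b::comm_ring_1" and M :: "'a^'n^'n"
  assumes h1: "h 1 = 1" and h0: "h 0 = 0" and hadd: "\<And>x y. h (x + y) = h x + h y"
    and hminus: "\<And>x. h (- x) = - h x" and hmult: "\<And>x y. h (x * y) = h x * h y"
  shows "h (det M) = det (\<chi> i j. h (M$i$j))"
proof -
  have hprod: "h (prod f S) = (\<Prod>x\<in>S. h (f x))" for f :: "'n \<Rightarrow> 'a" and S
    by (induction S rule: infinite_finite_induct) (simp_all add: h1 hmult)
  have hsum: "h (sum f S) = (\<Sum>x\<in>S. h (f x))" for f :: "('n \<Rightarrow> 'n) \<Rightarrow> 'a" and S
    using sum_comp_morphism[of h f S, OF h0 hadd] by (simp add: o_def)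
  show ?thesis
    unfolding det_def hsum by (auto simp: sign_def hmult hminus h1 hprod intro!: sum.cong)
qed

lemma map_poly_of_real_add:
  "map_poly of_real (p + q) = map_poly of_real p + (map_poly of_real q :: 'a::real_algebra_1 poly)"
  by (rule poly_eqI) (simp add: coeff_map_poly)

lemma map_poly_of_real_minus:
  "map_poly of_real (- p) = - (map_poly of_real p :: 'a::real_algebra_1 poly)"
  by (rule poly_eqI) (simp add: coeff_map_poly)

lemma map_poly_of_real_mult:
  "map_poly of_real (p * q) = map_poly of_real p * (map_poly of_real q :: 'a::{real_algebra_1,comm_ring_1} poly)"
  by (rule poly_eqI) (simp add: coeff_map_poly coeff_mult of_real_sum)

lemma map_poly_of_real_prod_mset:
  "map_poly of_real (\<Prod>x\<in>#X. f x) = (\<Prod>x\<in>#X. map_poly of_real (f x) :: 'a::{real_algebra_1,comm_ring_1} poly)"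
  by (induction X) (simp_all add: map_poly_of_real_mult)

lemma map_poly_of_real_eq_iff:
  "(map_poly of_real p = (map_poly of_real q :: 'a::real_algebra_1 poly)) \<longleftrightarrow> p = q"
  by (metis coeff_map_poly of_real_0 of_real_eq_iff poly_eqI)

lemma poly_charpoly_complex_eq_det:
  fixes M :: "real^'n^'n"
  shows "poly (map_poly complex_of_real (charpoly M)) z
           = det (\<chi> i j. (if i = j then z else 0) - complex_of_real (M$i$j))"
proof -
  let ?h = "\<lambda>q. poly (map_poly complex_of_real q) z"
  have "?h (charpoly M)
     = det (\<chi> i j. ?h (if i = j then [:- (M$i$j), 1:] else [:- (M$i$j):]))"
    unfolding charpoly_def
    by (subst det_ring_hom[of ?h])
      (simp_all add: map_poly_of_real_add map_poly_of_real_minus map_poly_of_real_mult)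
  also have "\<dots> = det (\<chi> i j. (if i = j then z else 0) - complex_of_real (M$i$j))"
    by (rule arg_cong[of _ _ det]) (simp add: vec_eq_iff map_poly_pCons)
  finally show ?thesis .
qed

lemma singular_matrix_kernel:
  fixes B :: "'a::field^'n^'n"
  assumes "det B = 0"
  obtains v where "v \<noteq> 0" and "B *v v = 0"
proof -
  have "\<not> inj ((*v) B)"
    using det_nz_iff_inj_gen[OF matrix_vector_mul_linear_gen, of B] assms
    by (simp add: matrix_of_matrix_vector_mul)
  then show ?thesis
    using that vec.inj_iff_eq_0 by blast
qed

lemma Vmat_entry: "finite A \<Longrightarrow> Vmat A p $ i $ j = (\<Sum>c\<in>A. p c * (c$i * c$j))"
  by (simp add: Vmat_def outer_def)

lemma Vmat_complex_eigenvalue_nonneg: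
  fixes A :: "(real^'n) set" and v :: "complex^'n"
  assumes fA: "finite A" and pnn: "\<forall>a. 0 \<le> p a" and v0: "v \<noteq> 0"
    and eig: "\<And>i. z * v$i = (\<Sum>j\<in>UNIV. complex_of_real (Vmat A p $ i $ j) * v$j)"
  shows "z = complex_of_real (Re z) \<and> 0 \<le> Re z"
proof -
  define w where "w c = (\<Sum>j\<in>UNIV. complex_of_real (c$j) * v$j)" for c :: "real^'n"
  define N where "N = (\<Sum>i\<in>UNIV. (cmod (v$i))\<^sup>2)"
  define R where "R = (\<Sum>c\<in>A. p c * (cmod (w c))\<^sup>2)"
  have eig_w: "z * v$i = (\<Sum>c\<in>A. complex_of_real (p c * c$i) * w c)" for i
  proof -
    have "z * v$i = (\<Sum>j\<in>UNIV. \<Sum>c\<in>A. complex_of_real (p c * c$i) * (complex_of_real (c$j) * v$j))"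
      unfolding eig Vmat_entry[OF fA] by (simp add: sum_distrib_left sum_distrib_right mult_ac)
    also have "\<dots> = (\<Sum>c\<in>A. complex_of_real (p c * c$i) * w c)"
      by (subst sum.swap) (simp add: w_def sum_distrib_left)
    finally show ?thesis .
  qed
  have "z * complex_of_real N = (\<Sum>i\<in>UNIV. cnj (v$i) * (z * v$i))"
    by (simp add: N_def sum_distrib_left complex_norm_square mult_ac del: of_real_power)
  also have "\<dots> = (\<Sum>c\<in>A. complex_of_real (p c) * (cnj (w c) * w c))"
    unfolding eig_w sum_distrib_left
    by (subst sum.swap) (simp add: w_def sum_distrib_left sum_distrib_right mult_ac)
  also have "\<dots> = complex_of_real R"
    by (simp add: R_def complex_norm_square mult_ac del: of_real_power)
  finally have zN: "z * complex_of_real N = complex_of_real R" .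
  obtain i where "v$i \<noteq> 0" using v0 by (auto simp: vec_eq_iff)
  then have "0 < N" unfolding N_def by (intro sum_pos2[of UNIV i]) auto
  moreover have "0 \<le> R" unfolding R_def using pnn by (intro sum_nonneg) simp
  moreover from zN \<open>0 < N\<close> have "z = complex_of_real (R / N)" by (simp add: field_simps)
  ultimately show ?thesis by simp
qed

lemma charpoly_Vmat_root_real_nonneg:
  fixes A :: "(real^'n) set"
  assumes fA: "finite A" and pnn: "\<forall>a. 0 \<le> p a"
    and root: "poly (map_poly complex_of_real (charpoly (Vmat A p))) z = 0"
  shows "z = complex_of_real (Re z) \<and> 0 \<le> Re z"
proof -
  let ?B = "\<chi> i j. (if i = j then z else 0) - complex_of_real (Vmat A p $ i $ j)"
  have "det ?B = 0" using root by (simp add: poly_charpoly_complex_eq_det)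
  then obtain v where v0: "v \<noteq> 0" and Bv: "?B *v v = 0" by (rule singular_matrix_kernel)
  have eig: "z * v$i = (\<Sum>j\<in>UNIV. complex_of_real (Vmat A p $ i $ j) * v$j)" for i
  proof -
    have "(?B *v v) $ i = 0" using Bv by simp
    moreover have "(\<Sum>j\<in>UNIV. (if i = j then z else 0) * v$j) = z * v$i"
      by (simp add: if_distrib[of "\<lambda>x. x * _"] cong: if_cong)
    ultimately show ?thesis by (simp add: matrix_vector_mult_def left_diff_distrib sum_subtractf)
  qed
  show ?thesis by (rule Vmat_complex_eigenvalue_nonneg[OF fA pnn v0 eig])
qed

lemma charpoly_monic:
  fixes M :: "real^'n^'n"
  shows degree_charpoly: "degree (charpoly M) = CARD('n)"
    and lead_coeff_charpoly: "lead_coeff (charpoly M) = 1"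
proof -
  define P :: "real poly^'n^'n"
    where "P = (\<chi> i j. if i = j then [:- (M$i$j), 1:] else [:- (M$i$j):])"
  define t where "t p = of_int (sign p) * (\<Prod>i\<in>UNIV. P$i$p i)" for p :: "'n \<Rightarrow> 'n"
  have charpoly_eq: "charpoly M = (\<Sum>p\<in>{p. p permutes UNIV}. t p)"
    unfolding charpoly_def det_def t_def P_def by simp
  have degree_t: "degree (t p) \<le> card {i. p i = i}" for p
  proof -
    have "degree (t p) \<le> (\<Sum>i\<in>UNIV. degree (P$i$p i))"
      unfolding t_def using degree_prod_sum_le[of UNIV "\<lambda>i. P$i$p i"]
      by (simp add: o_def sign_def)
    also have "\<dots> \<le> (\<Sum>i\<in>UNIV. if p i = i then 1 else 0)"
      by (rule sum_mono) (auto simp: P_def)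
    finally show ?thesis by (simp add: sum.If_cases)
  qed
  have "card {i. p i = i} < CARD('n)" if "p \<noteq> id" for p :: "'n \<Rightarrow> 'n"
    using that by (intro psubset_card_mono) (auto simp: fun_eq_iff)
  then have coeff_t: "coeff (t p) CARD('n) = 0" if "p \<noteq> id" for p
    using degree_t[of p] that by (intro coeff_eq_0) fastforce
  have t_id: "t id = (\<Prod>i\<in>UNIV. [:- (M$i$i), 1:])"
    unfolding t_def by (simp add: P_def)
  have "degree (charpoly M) \<le> CARD('n)"
    unfolding charpoly_eq
    by (intro degree_sum_le) (simp_all add: order_trans[OF degree_t] card_mono)
  moreover have coeff_top: "coeff (charpoly M) CARD('n) = 1"
  proof -
    have "coeff (charpoly M) CARD('n) = coeff (t id) CARD('n)"
      unfolding charpoly_eq coeff_sum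
      by (subst sum.remove[of _ id]) (auto simp: permutes_id coeff_t intro!: sum.neutral)
    also have "\<dots> = 1"
    proof -
      have "degree (t id) = CARD('n)" unfolding t_id by (simp add: degree_prod_sum_eq)
      moreover have "lead_coeff (t id) = 1" unfolding t_id by (simp add: lead_coeff_prod)
      ultimately show ?thesis by simp
    qed
    finally show ?thesis .
  qed
  ultimately show "degree (charpoly M) = CARD('n)"
    by (metis le_antisym le_degree zero_neq_one)
  with coeff_top show "lead_coeff (charpoly M) = 1" by simp
qed

lemma charpoly_Vmat_splits:
  fixes A :: "(real^'n) set"
  assumes fA: "finite A" and pnn: "\<forall>a. 0 \<le> p a"
  obtains R where "charpoly (Vmat A p) = (\<Prod>x\<in>#R. [:- x, 1:])" and "\<forall>x\<in>#R. 0 \<le> x"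
proof
  define Q where "Q = map_poly complex_of_real (charpoly (Vmat A p))"
  define R where "R = image_mset Re (proots Q)"
  have lead_Q: "lead_coeff Q = 1"
    using lead_coeff_charpoly[of "Vmat A p"] by (simp add: Q_def degree_map_poly coeff_map_poly)
  then have "Q \<noteq> 0" by auto
  then have roots: "x = complex_of_real (Re x) \<and> 0 \<le> Re x" if "x \<in># proots Q" for x
    using that charpoly_Vmat_root_real_nonneg[OF fA pnn] by (simp add: Q_def)
  then have proots_Q: "proots Q = image_mset complex_of_real R"
    unfolding R_def by (simp add: multiset.map_comp o_def image_mset_cong[of _ _ id])
  have "Q = (\<Prod>x\<in>#proots Q. [:- x, 1:])"
    using complex_poly_decompose_multiset[of Q] lead_Q by simp
  also have "\<dots> = map_poly complex_of_real (\<Prod>x\<in>#R. [:- x, 1:])"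
    by (simp add: proots_Q map_poly_of_real_prod_mset map_poly_pCons multiset.map_comp o_def)
  finally show "charpoly (Vmat A p) = (\<Prod>x\<in>#R. [:- x, 1:])"
    by (simp add: Q_def map_poly_of_real_eq_iff)
  show "\<forall>x\<in>#R. 0 \<le> x" using roots by (auto simp: R_def)
qed

lemma prod_list_linear_nonzero: "(\<Prod>x\<leftarrow>xs. [:- x, 1:]) \<noteq> (0 :: 'a::idom poly)"
  by (auto simp: prod_list_zero_iff)

lemma degree_prod_list_linear:
  "degree (\<Prod>x\<leftarrow>xs. [:- x, 1:]) = length (xs :: 'a::idom list)"
  by (induction xs) (simp_all add: degree_mult_eq prod_list_linear_nonzero del: mult_pCons_left)

lemma proots_prod_list_linear:
  "proots (\<Prod>x\<leftarrow>xs. [:- x, 1:]) = mset (xs :: 'a::idom list)"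
  by (induction xs) (simp_all add: proots_mult prod_list_linear_nonzero del: mult_pCons_left)

lemma eigs_sorted_eqI:
  fixes M :: "real^'n^'n"
  assumes "sorted ls" and "charpoly M = (\<Prod>x\<leftarrow>ls. [:- x, 1:])"
  shows "eigs_sorted M = ls"
  unfolding eigs_sorted_def
proof (rule the_equality)
  show "sorted ls \<and> length ls = CARD('n) \<and> charpoly M = (\<Prod>x\<leftarrow>ls. [:- x, 1:])"
    using assms degree_charpoly[of M] by (simp add: degree_prod_list_linear)
  fix ls' assume ls': "sorted ls' \<and> length ls' = CARD('n) \<and> charpoly M = (\<Prod>x\<leftarrow>ls'. [:- x, 1:])"
  then have "mset ls' = mset ls"
    using assms(2) proots_prod_list_linear[of ls] proots_prod_list_linear[of ls'] by simp
  with ls' have "sort ls = ls'" by (intro properties_for_sort) simp_all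
  with assms(1) show "ls' = ls" by (simp add: sorted_sort_id)
qed

lemma eigk_Vmat_nonneg:
  fixes A :: "(real^'n) set"
  assumes "finite A" and "\<forall>a. 0 \<le> p a" and "k \<in> {1..CARD('n)}"
  shows "0 \<le> eigk (Vmat A p) k"
proof -
  obtain R where split: "charpoly (Vmat A p) = (\<Prod>x\<in>#R. [:- x, 1:])" and R: "\<forall>x\<in>#R. 0 \<le> x"
    using charpoly_Vmat_splits[OF assms(1,2)] .
  define ls where "ls = sorted_list_of_multiset R"
  have charpoly_ls: "charpoly (Vmat A p) = (\<Prod>x\<leftarrow>ls. [:- x, 1:])"
    unfolding split ls_def by (simp flip: prod_mset_prod_list)
  then have eigs: "eigs_sorted (Vmat A p) = ls"
    by (intro eigs_sorted_eqI) (simp_all add: ls_def)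
  have "length ls = CARD('n)"
    using degree_charpoly[of "Vmat A p"] by (simp add: charpoly_ls degree_prod_list_linear)
  then have "ls ! (k - 1) \<in># R"
    using assms(3) nth_mem[of "k - 1" ls] by (auto simp: ls_def)
  then show ?thesis using R by (simp add: eigk_def eigs)
qed

lemma Vmat_mult_vec:
  assumes "finite A"
  shows "Vmat A p *v w = (\<Sum>c\<in>A. (p c * (c \<bullet> w)) *\<^sub>R c)"
proof -
  have "(Vmat A p *v w) $ i = (\<Sum>c\<in>A. p c * c$i * (c \<bullet> w))" for i
  proof -
    have "(Vmat A p *v w) $ i = (\<Sum>j\<in>UNIV. \<Sum>c\<in>A. p c * c$i * (c$j * w$j))"
      by (simp add: matrix_vector_mult_def Vmat_entry[OF assms]
          sum_distrib_left sum_distrib_right mult_ac)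
    also have "\<dots> = (\<Sum>c\<in>A. p c * c$i * (c \<bullet> w))"
      by (subst sum.swap) (simp add: inner_vec_def sum_distrib_left)
    finally show ?thesis .
  qed
  then show ?thesis by (simp add: vec_eq_iff sum_component mult_ac)
qed

lemma gfun_pos:
  fixes A B :: "(real^'n) set"
  assumes fA: "finite A" and fB: "finite B" and pnn: "\<forall>a. 0 \<le> p a"
    and a0: "a0 \<in> B" "a0 \<noteq> 0"
  shows "0 < gfun A B p"
proof (cases "invertible (Vmat A p)")
  case True
  define V where "V = Vmat A p"
  define w where "w = matrix_inv V *v a0"
  have "V ** matrix_inv V = mat 1"
    using True unfolding invertible_def matrix_inv_def V_def by (metis (mono_tags, lifting) someI_ex)
  then have Vw: "V *v w = a0"
    by (simp add: w_def matrix_vector_mul_assoc)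
  have quad: "a0 \<bullet> w = (\<Sum>c\<in>A. p c * (c \<bullet> w)\<^sup>2)"
    unfolding Vw[symmetric] V_def Vmat_mult_vec[OF fA]
    by (simp add: inner_sum_left power2_eq_square mult_ac)
  have "(\<Sum>c\<in>A. p c * (c \<bullet> w)\<^sup>2) \<noteq> 0"
  proof
    assume "(\<Sum>c\<in>A. p c * (c \<bullet> w)\<^sup>2) = 0"
    then have "\<forall>c\<in>A. p c * (c \<bullet> w) = 0"
      using pnn fA by (subst (asm) sum_nonneg_eq_0_iff) auto
    then have "V *v w = 0" unfolding V_def Vmat_mult_vec[OF fA] by (auto intro!: sum.neutral)
    with Vw a0 show False by simp
  qed
  moreover have "0 \<le> (\<Sum>c\<in>A. p c * (c \<bullet> w)\<^sup>2)" using pnn by (intro sum_nonneg) simp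
  ultimately have "0 < a0 \<bullet> (matrix_inv V *v a0)" unfolding w_def[symmetric] quad by simp
  also have "\<dots> \<le> Max ((\<lambda>a. a \<bullet> (matrix_inv V *v a)) ` B)"
    using fB a0 by (intro Max_ge) auto
  finally show ?thesis using True by (simp add: gfun_def V_def)
qed (simp add: gfun_def)

lemma deff_pos:
  fixes A :: "(real^'n) set"
  assumes fA: "finite A" and pnn: "\<forall>a. 0 \<le> poff a" and a0: "a0 \<in> A" "a0 \<noteq> 0"
    and T: "1 \<le> T"
  shows "0 < deff A T Toff poff"
proof -
  define S where "S = (\<Sum>k=1..CARD('n). inverse (1 + (real Toff / real T) *
          eigk (Vmat A poff) k / Max ((\<lambda>a. (norm a)\<^sup>2) ` A)))"
  define G where "G = (if Toff = 0 then \<infinity> else ereal (real T / real Toff) * gfun A A poff)"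
  have "(norm a0)\<^sup>2 \<le> Max ((\<lambda>a. (norm a)\<^sup>2) ` A)" using fA a0 by (intro Max_ge) auto
  moreover have "0 < (norm a0)\<^sup>2" using a0 by simp
  ultimately have "0 < Max ((\<lambda>a. (norm a)\<^sup>2) ` A)" by linarith
  then have "0 < S" unfolding S_def using eigk_Vmat_nonneg[OF fA pnn] T
    by (intro sum_pos) (auto intro!: divide_nonneg_pos add_pos_nonneg)
  moreover have "0 < G"
    using gfun_pos[OF fA fA pnn a0] T by (auto simp: G_def ereal_zero_less_0_iff)
  ultimately have "0 < min (ereal S) G" and "min (ereal S) G \<le> ereal S" by auto
  then show ?thesis
    unfolding deff_def S_def[symmetric] G_def[symmetric] by (cases "min (ereal S) G") auto
qed

lemma logterm_ge_ln4:
  assumes "1 \<le> l" and "A \<noteq> {}" and "finite A" and "1 \<le> T"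
  shows "ln 4 \<le> logterm A T l"
proof -
  have "1 \<le> l ^ 2 * card A * T"
    using assms by (simp add: Suc_le_eq card_gt_0_iff)
  then have "1 \<le> real l ^ 2 * real (card A) * real T"
    by (metis of_nat_1 of_nat_le_iff of_nat_mult of_nat_power)
  then have "4 \<le> 4 * real l ^ 2 * real (card A) * real T" by simp
  then show ?thesis unfolding logterm_def by (intro ln_mono) auto
qed

lemma le_HinvI:
  assumes "A \<noteq> {}" and "finite A" and "1 \<le> T"
    and "(\<Sum>l=1..n. 4 ^ l * logterm A T l) \<le> x"
  shows "n \<le> Hinv A T x"
proof -
  have linear_growth: "real m * ln 4 \<le> (\<Sum>l=1..m. 4 ^ l * logterm A T l)" for m
  proof -
    have "(\<Sum>l=1..m. ln 4) \<le> (\<Sum>l=1..m. 4 ^ l * logterm A T l)"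
    proof (intro sum_mono)
      fix l assume "l \<in> {1..m}"
      then have ln4: "ln 4 \<le> logterm A T l" by (intro logterm_ge_ln4) (use assms in auto)
      then have "0 \<le> logterm A T l" by (rule order_trans[rotated]) simp
      then have "1 * logterm A T l \<le> 4 ^ l * logterm A T l"
        by (intro mult_right_mono) simp_all
      with ln4 show "ln 4 \<le> 4 ^ l * logterm A T l" by simp
    qed
    then show ?thesis by simp
  qed
  have "{m. (\<Sum>l=1..m. 4 ^ l * logterm A T l) \<le> x} \<subseteq> {..nat \<lceil>x / ln 4\<rceil>}"
  proof
    fix m assume "m \<in> {m. (\<Sum>l=1..m. 4 ^ l * logterm A T l) \<le> x}"
    then have "real m \<le> x / ln 4" using linear_growth[of m] by (simp add: field_simps)
    then show "m \<in> {..nat \<lceil>x / ln 4\<rceil>}" by (simp add: le_nat_iff) linarith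
  qed
  then have "finite {m. (\<Sum>l=1..m. 4 ^ l * logterm A T l) \<le> x}" by (rule finite_subset) simp
  with assms(4) show ?thesis unfolding Hinv_def by (intro Max_ge) auto
qed

lemma distr_on_mono:
  assumes "distr_on B p" and "B \<subseteq> A" and "finite A"
  shows "distr_on A p"
  using assms sum.mono_neutral_right[OF assms(3,2), of p] by (auto simp: distr_on_def)

lemma completed_mono:
  "completed A T Toff poff Act pis l \<Longrightarrow> j \<le> l \<Longrightarrow> completed A T Toff poff Act pis j"
  unfolding completed_def by auto

lemma completed_onUsed_le:
  "completed A T Toff poff Act pis l \<Longrightarrow> onUsed A T Toff poff pis l \<le> T"
  by (cases "l = 0") (auto simp: completed_def onUsed_def)

lemma oope_run_design:
  assumes "oope_run A T Toff Noff poff yon yoff Act pis th" and "1 \<le> l"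
    and "completed A T Toff poff Act pis (l - 1)" and "card (Act l) \<noteq> 1"
  shows "distr_on (Act l) (pis l)"
  using assms(1) unfolding oope_run_def by (elim conjE allE[of _ l]) (use assms(2-4) in blast)

lemma oope_run_eliminate:
  assumes "oope_run A T Toff Noff poff yon yoff Act pis th" and "1 \<le> l"
    and "completed A T Toff poff Act pis l"
  shows "Act (Suc l) = Act l - {a \<in> Act l. 2 * epsl l \<le> Max ((\<lambda>a'. (a' - a) \<bullet> th l) ` Act l)}"
  using assms(1) unfolding oope_run_def by (elim conjE allE[of _ l]) (use assms(2,3) in blast)

lemma oope_run_active_subset:
  assumes "oope_run A T Toff Noff poff yon yoff Act pis th"
    and "completed A T Toff poff Act pis l"
  shows "Act (Suc l) \<subseteq> A"
  using assms(2)
proof (induction l)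
  case 0
  then show ?case using assms(1) by (simp add: oope_run_def)
next
  case (Suc l)
  then have "Act (Suc l) \<subseteq> A" using completed_mono by fastforce
  moreover have "Act (Suc (Suc l)) \<subseteq> Act (Suc l)"
    using oope_run_eliminate[OF assms(1) _ Suc.prems] by simp
  ultimately show ?case by blast
qed

lemma oope_run_design_distr:
  assumes fA: "finite A" and run: "oope_run A T Toff Noff poff yon yoff Act pis th"
    and comp: "completed A T Toff poff Act pis l" and j: "j \<in> {1..l}"
  shows "distr_on A (pis j)"
proof (rule distr_on_mono[OF _ _ fA])
  have "completed A T Toff poff Act pis (j - 1)" using comp j by (auto intro: completed_mono)
  moreover have "card (Act j) \<noteq> 1" using comp j by (simp add: completed_def)
  ultimately show "distr_on (Act j) (pis j)"
    using oope_run_design[OF run] j by simp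
  show "Act j \<subseteq> A"
    using oope_run_active_subset[OF run \<open>completed A T Toff poff Act pis (j - 1)\<close>] j by simp
qed

lemma epsl_sq: "(epsl l)\<^sup>2 = 1 / 4 ^ l"
  by (simp add: epsl_def power_divide power2_eq_square flip: power_mult_distrib)

lemma onUsed_lower_bound:
  assumes "finite A" and "\<forall>j\<in>{1..l}. distr_on A (pis j)"
  shows "3 * deff A T Toff poff * (\<Sum>j=1..l. 4 ^ j * logterm A T j) \<le> onUsed A T Toff poff pis l"
proof -
  have "3 * deff A T Toff poff * (4 ^ j * logterm A T j) \<le> (\<Sum>a\<in>A. non A T Toff poff pis j a)"
    if "j \<in> {1..l}" for j
  proof -
    have "(\<Sum>a\<in>A. pis j a) = 1" using assms(2) that by (simp add: distr_on_def)
    then have "3 * deff A T Toff poff * (4 ^ j * logterm A T j)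
        = (\<Sum>a\<in>A. pis j a) * (3 * deff A T Toff poff * (4 ^ j * logterm A T j))"
      by simp
    also have "\<dots> = (\<Sum>a\<in>A. 3 * deff A T Toff poff * pis j a * logterm A T j / (epsl j)\<^sup>2)"
      by (simp add: epsl_sq sum_distrib_left sum_distrib_right mult_ac)
    also have "\<dots> \<le> (\<Sum>a\<in>A. real (non A T Toff poff pis j a))"
      by (intro sum_mono) (simp add: non_def real_nat_ceiling_ge)
    finally show ?thesis by simp
  qed
  then have "3 * deff A T Toff poff * (\<Sum>j=1..l. 4 ^ j * logterm A T j)
      \<le> (\<Sum>j=1..l. real (\<Sum>a\<in>A. non A T Toff poff pis j a))"
    unfolding sum_distrib_left by (intro sum_mono) simp
  then show ?thesis by (simp add: onUsed_def)
qed

theorem lemma4p2: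
  fixes A :: "(real^'n) set" and T Toff :: nat and Noff :: "real^'n \<Rightarrow> nat"
    and poff :: "real^'n \<Rightarrow> real"
    and yon :: "nat \<Rightarrow> real^'n \<Rightarrow> nat \<Rightarrow> real" and yoff :: "real^'n \<Rightarrow> nat \<Rightarrow> real"
    and Act :: "nat \<Rightarrow> (real^'n) set" and pis :: "nat \<Rightarrow> real^'n \<Rightarrow> real"
    and th :: "nat \<Rightarrow> real^'n"
  assumes "finite A" and "span A = UNIV"
    and "1 \<le> T"
    and "distr_on A poff"
    and "\<forall>a. real (Noff a) = poff a * real Toff"
    and "oope_run A T Toff Noff poff yon yoff Act pis th"
    and "completed A T Toff poff Act pis lM"
  shows "lM \<le> Hinv A T (real T / (3 * deff A T Toff poff))"
proof -
  obtain a0 where a0: "a0 \<in> A" "a0 \<noteq> 0"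
  proof -
    have "\<not> A \<subseteq> {0}"
    proof
      assume "A \<subseteq> {0}"
      then have "span A \<subseteq> {0}" using span_mono[of A "{0}"] by simp
      with assms(2) have "(axis undefined 1 :: real^'n) = 0" by blast
      then show False by (simp add: axis_eq_0_iff)
    qed
    with that show ?thesis by blast
  qed
  have "0 < deff A T Toff poff"
    using deff_pos[OF assms(1) _ a0 assms(3)] assms(4) by (simp add: distr_on_def)
  moreover have "3 * deff A T Toff poff * (\<Sum>l=1..lM. 4 ^ l * logterm A T l) \<le> real T"
    using onUsed_lower_bound[OF assms(1)] oope_run_design_distr[OF assms(1,6,7)]
      completed_onUsed_le[OF assms(7)] by (meson of_nat_le_iff order_trans)
  ultimately have "(\<Sum>l=1..lM. 4 ^ l * logterm A T l) \<le> real T / (3 * deff A T Toff poff)"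
    by (simp add: field_simps)
  then show ?thesis using a0 by (intro le_HinvI[OF _ assms(1,3)]) auto
qed

end
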